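(* There exists a constant $L>0$ such that for all symmetric matrices $Q,\delta Q\in\mathbb{R}^{3\times3}$, $|P(Q+\delta Q)-P(Q)|_F\le L\,|\delta Q|_F$.
   Context: Let $a,b\in\mathbb{R}$, $c>0$, and $A_0>0$ such that $\inf\{\frac a2\operatorname{tr}(Q^2)-\frac b3\operatorname{tr}(Q^3)+\frac c4(\operatorname{tr}(Q^2))^2+A_0:\ Q\in\mathbb{R}^{3\times3}\text{ symmetric}\}>0$. For symmetric $Q\in\mathbb{R}^{3\times3}$ define $r(Q)=\sqrt{2\big(\frac a2\operatorname{tr}(Q^2)-\frac b3\operatorname{tr}(Q^3)+\frac c4(\operatorname{tr}(Q^2))^2+A_0\big)}$, $S(Q)=aQ-b\big(Q^2-\frac13\operatorname{tr}(Q^2)I\big)+c\operatorname{tr}(Q^2)Q$, and $P(Q)=S(Q)/r(Q)$. $|A|_F=\sqrt{\sum_{i,j}A_{ij}^2}$ is the Frobenius norm. *)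

theory Defs
  imports "HOL-Analysis.Analysis"
begin

definition sym_mat :: "real^3^3 \<Rightarrow> bool" where
  "sym_mat Q \<longleftrightarrow> transpose Q = Q"

definition frob :: "real^3^3 \<Rightarrow> real" where
  "frob A = sqrt (\<Sum>i\<in>UNIV. \<Sum>j\<in>UNIV. (A $ i $ j)^2)"

definition ldg_f :: "real \<Rightarrow> real \<Rightarrow> real \<Rightarrow> real \<Rightarrow> real^3^3 \<Rightarrow> real" where
  "ldg_f a b c A0 Q = a / 2 * trace (Q ** Q) - b / 3 * trace (Q ** Q ** Q)
     + c / 4 * (trace (Q ** Q))^2 + A0"

definition ldg_r :: "real \<Rightarrow> real \<Rightarrow> real \<Rightarrow> real \<Rightarrow> real^3^3 \<Rightarrow> real" where
  "ldg_r a b c A0 Q = sqrt (2 * ldg_f a b c A0 Q)"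

definition ldg_S :: "real \<Rightarrow> real \<Rightarrow> real \<Rightarrow> real^3^3 \<Rightarrow> real^3^3" where
  "ldg_S a b c Q = a *\<^sub>R Q - b *\<^sub>R (Q ** Q - (trace (Q ** Q) / 3) *\<^sub>R mat 1)
     + (c * trace (Q ** Q)) *\<^sub>R Q"

definition ldg_P :: "real \<Rightarrow> real \<Rightarrow> real \<Rightarrow> real \<Rightarrow> real^3^3 \<Rightarrow> real^3^3" where
  "ldg_P a b c A0 Q = (1 / ldg_r a b c A0 Q) *\<^sub>R ldg_S a b c Q"

end

theory Submission
  imports Defs "HOL-Real_Asymp.Real_Asymp"
begin

text \<open>On symmetric matrices the bulk energy \<open>ldg_f\<close> grows like \<open>c/4 |Q|\<^sup>4\<close> at infinity and is
  bounded below by its positive infimum, hence \<open>ldg_f Q \<ge> k (1 + |Q|)\<^sup>4\<close> and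
  \<open>r = sqrt (2 f) \<ge> \<kappa> (1 + |Q|)\<^sup>2\<close>. The numerator \<open>S\<close> is a cubic polynomial in \<open>Q\<close>, so
  \<open>|S Q| = O((1 + |Q|)\<^sup>3)\<close> and on a ball of radius \<open>\<rho>\<close> it has Lipschitz constant \<open>O(\<rho>\<^sup>2)\<close>;
  likewise \<open>f\<close> has Lipschitz constant \<open>O(\<rho>\<^sup>3)\<close> there, which gives \<open>r\<close> the constant \<open>O(\<rho>)\<close>.
  These growth rates balance exactly in \<open>P = S / r\<close>, which is therefore globally Lipschitz.\<close>

lemma power2_norm_matrix: "(norm A)^2 = (\<Sum>i\<in>UNIV. \<Sum>j\<in>UNIV. (A $ i $ j)^2)"
  for A :: "real^'n^'m"
  by (simp add: norm_vec_def L2_set_def sum_nonneg)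

lemma norm_matrix_mult_le: "norm (A ** B) \<le> norm A * norm B"
  for A :: "real^'n^'m" and B :: "real^'p^'n"
proof -
  have entry: "(A ** B) $ i $ j = A $ i \<bullet> column j B" for i j
    by (simp add: matrix_matrix_mult_def inner_vec_def column_def mult.commute)
  have "(norm (A ** B))^2 = (\<Sum>i\<in>UNIV. \<Sum>j\<in>UNIV. (A $ i \<bullet> column j B)^2)"
    by (simp add: power2_norm_matrix entry)
  also have "\<dots> \<le> (\<Sum>i\<in>UNIV. \<Sum>j\<in>UNIV. (norm (A $ i))^2 * (norm (column j B))^2)"
    by (intro sum_mono) (simp add: Cauchy_Schwarz_ineq power2_norm_eq_inner)
  also have "\<dots> = (\<Sum>i\<in>UNIV. (norm (A $ i))^2) * (\<Sum>j\<in>UNIV. (norm (column j B))^2)"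
    by (simp add: sum_product)
  also have "\<dots> = (norm A * norm B)^2"
    by (simp add: power2_norm_matrix power_mult_distrib norm_vec_def L2_set_def sum_nonneg
        column_def sum.swap[of _ "UNIV::'n set"])
  finally show ?thesis
    by (rule power2_le_imp_le) simp
qed

lemma norm_matrix_square_le: "norm (A ** A) \<le> (norm A)^2"
  for A :: "real^'n^'n"
  using norm_matrix_mult_le[of A A] by (simp add: power2_eq_square)

lemma abs_trace_le: "\<bar>trace A\<bar> \<le> CARD('n) * norm A"
  for A :: "real^'n^'n"
proof -
  have "\<bar>trace A\<bar> \<le> (\<Sum>i\<in>UNIV. \<bar>A $ i $ i\<bar>)"
    unfolding trace_def by (rule sum_abs)
  also have "\<dots> \<le> (\<Sum>i\<in>(UNIV::'n set). norm A)"
    by (intro sum_mono order_trans[OF component_le_norm_cart Finite_Cartesian_Product.norm_nth_le])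
  finally show ?thesis by simp
qed

lemma trace_square_eq_power2_norm: "transpose A = A \<Longrightarrow> trace (A ** A) = (norm A)^2"
  for A :: "real^'n^'n"
  unfolding trace_def matrix_matrix_mult_def power2_norm_matrix
  by (metis (no_types, lifting) power2_eq_square sum.cong transpose_def vec_lambda_beta)

lemma norm_mat_one: "norm (mat 1 :: real^'n^'n) = sqrt CARD('n)"
  by (simp add: norm_vec_def L2_set_def mat_def if_distrib if_distribR cong: if_cong)

lemma matrix_diff_ldistrib: "A ** (B - C) = A ** B - A ** C"
  for A :: "real^'n^'m" and B C :: "real^'p^'n"
  by (simp add: matrix_matrix_mult_def vec_eq_iff sum_subtractf right_diff_distrib)

lemma matrix_diff_rdistrib: "(B - C) ** A = B ** A - C ** A"
  for A :: "real^'p^'n" and B C :: "real^'n^'m"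
  by (simp add: matrix_matrix_mult_def vec_eq_iff sum_subtractf left_diff_distrib)

lemma norm_matrix_square_diff_le:
  fixes A B :: "real^'n^'n"
  assumes "norm A \<le> \<rho>" and "norm B \<le> \<rho>"
  shows "norm (B ** B - A ** A) \<le> 2 * \<rho> * norm (B - A)"
proof -
  have "B ** B - A ** A = B ** (B - A) + (B - A) ** A"
    by (simp add: matrix_diff_ldistrib matrix_diff_rdistrib)
  then have "norm (B ** B - A ** A) \<le> norm B * norm (B - A) + norm (B - A) * norm A"
    by (metis add_mono norm_matrix_mult_le norm_triangle_le)
  also have "\<dots> \<le> \<rho> * norm (B - A) + norm (B - A) * \<rho>"
    using assms by (intro add_mono mult_right_mono mult_left_mono) simp_all
  finally show ?thesis by simp
qed

lemma norm_matrix_cube_diff_le: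
  fixes A B :: "real^'n^'n"
  assumes "norm A \<le> \<rho>" and "norm B \<le> \<rho>"
  shows "norm (B ** B ** B - A ** A ** A) \<le> 3 * \<rho>^2 * norm (B - A)"
proof -
  have "B ** B ** B - A ** A ** A = (B ** B) ** (B - A) + (B ** B - A ** A) ** A"
    by (simp add: matrix_diff_ldistrib matrix_diff_rdistrib)
  then have "norm (B ** B ** B - A ** A ** A)
      \<le> norm (B ** B) * norm (B - A) + norm (B ** B - A ** A) * norm A"
    by (metis add_mono norm_matrix_mult_le norm_triangle_le)
  also have "\<dots> \<le> \<rho>^2 * norm (B - A) + (2 * \<rho> * norm (B - A)) * \<rho>"
  proof (intro add_mono mult_right_mono mult_mono)
    show "norm (B ** B) \<le> \<rho>^2"
      using norm_matrix_square_le[of B] power_mono[OF assms(2) norm_ge_zero, of 2] by linarith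
  qed (use assms norm_matrix_square_diff_le[OF assms] order_trans[OF norm_ge_zero assms(1)] in auto)
  finally show ?thesis by (simp add: power2_eq_square)
qed

lemma norm_scaleR_diff_le:
  "norm (s *\<^sub>R v - t *\<^sub>R w) \<le> \<bar>s\<bar> * norm (v - w) + \<bar>s - t\<bar> * norm w"
proof -
  have "s *\<^sub>R v - t *\<^sub>R w = s *\<^sub>R (v - w) + (s - t) *\<^sub>R w"
    by (simp add: algebra_simps)
  then show ?thesis
    by (metis norm_scaleR norm_triangle_ineq)
qed

lemma power_le_one_plus_power: "0 \<le> s \<Longrightarrow> k \<le> n \<Longrightarrow> s^k \<le> (1 + s)^n"
  for s :: real
  by (rule order_trans[OF power_mono power_increasing]) auto

lemma abs_sqrt_diff_le:
  fixes x y m :: real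
  assumes "0 \<le> x" "0 \<le> y" "0 < m" "m \<le> sqrt y"
  shows "\<bar>sqrt y - sqrt x\<bar> \<le> \<bar>y - x\<bar> / m"
proof -
  have "(sqrt y - sqrt x) * (sqrt y + sqrt x) = y - x"
    using assms(1,2) by (simp add: algebra_simps)
  then have "\<bar>sqrt y - sqrt x\<bar> * (sqrt y + sqrt x) = \<bar>y - x\<bar>"
    by (metis abs_mult abs_of_nonneg add_nonneg_nonneg real_sqrt_ge_zero assms(1,2))
  moreover have "m \<le> sqrt y + sqrt x"
    using assms(4) real_sqrt_ge_zero[OF assms(1)] by linarith
  then have "\<bar>sqrt y - sqrt x\<bar> * m \<le> \<bar>sqrt y - sqrt x\<bar> * (sqrt y + sqrt x)"
    by (rule mult_left_mono) simp
  ultimately show ?thesis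
    using assms(3) by (simp add: le_divide_eq)
qed

lemma quartic_ge_shifted_quartic:
  fixes c :: real
  assumes "0 < c"
  obtains M where "0 < M"
    and "\<And>s. 0 \<le> s \<Longrightarrow> c / 8 * (1 + s)^4 - M \<le> A0 + a / 2 * s^2 - \<bar>b\<bar> * s^3 + c / 4 * s^4"
proof -
  have "eventually (\<lambda>s. c / 8 * (1 + s)^4 \<le> A0 + a / 2 * s^2 - \<bar>b\<bar> * s^3 + c / 4 * s^4) at_top"
    using assms by real_asymp
  then obtain R where R: "\<And>s. R \<le> s \<Longrightarrow> c / 8 * (1 + s)^4 \<le> A0 + a / 2 * s^2 - \<bar>b\<bar> * s^3 + c / 4 * s^4"
    by (auto simp: eventually_at_top_linorder)
  define M where "M = 1 + c / 8 * (1 + \<bar>R\<bar>)^4 + \<bar>A0\<bar> + \<bar>a\<bar> * R^2 + \<bar>b\<bar> * \<bar>R\<bar>^3"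
  have "0 < M"
    using assms by (simp add: M_def add_pos_nonneg)
  moreover have "c / 8 * (1 + s)^4 - M \<le> A0 + a / 2 * s^2 - \<bar>b\<bar> * s^3 + c / 4 * s^4" if "0 \<le> s" for s
  proof (cases "R \<le> s")
    case True
    then show ?thesis using R \<open>0 < M\<close> by force
  next
    case False
    then have "(1 + s)^4 \<le> (1 + \<bar>R\<bar>)^4" "s^2 \<le> R^2" "s^3 \<le> \<bar>R\<bar>^3"
      using \<open>0 \<le> s\<close> by (auto intro!: power_mono)
    then have "c / 8 * (1 + s)^4 \<le> c / 8 * (1 + \<bar>R\<bar>)^4" "\<bar>a\<bar> * s^2 \<le> \<bar>a\<bar> * R^2"
        "\<bar>b\<bar> * s^3 \<le> \<bar>b\<bar> * \<bar>R\<bar>^3"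
      using assms by (auto intro: mult_left_mono)
    moreover have "- \<bar>a\<bar> * s^2 \<le> a * s^2"
      by (rule mult_right_mono) auto
    moreover have "0 \<le> c * s^4" "0 \<le> \<bar>a\<bar> * R^2" "- \<bar>A0\<bar> \<le> A0"
      using assms by simp_all
    ultimately show ?thesis
      unfolding M_def by linarith
  qed
  ultimately show ?thesis
    using that by blast
qed

lemma min_mult_le_of_lower_bounds:
  fixes y w m M \<kappa> :: real
  assumes "0 < m" "0 < M" "0 < \<kappa>" "0 \<le> w" "m \<le> y" "\<kappa> * w - M \<le> y"
  shows "min (\<kappa> / 2) (m * \<kappa> / (2 * M)) * w \<le> y"
proof (cases "2 * M \<le> \<kappa> * w")
  case True
  have "min (\<kappa> / 2) (m * \<kappa> / (2 * M)) * w \<le> \<kappa> / 2 * w"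
    using \<open>0 \<le> w\<close> by (intro mult_right_mono) simp_all
  with True assms(6) show ?thesis
    by linarith
next
  case False
  have "min (\<kappa> / 2) (m * \<kappa> / (2 * M)) * w \<le> m * \<kappa> / (2 * M) * w"
    using \<open>0 \<le> w\<close> by (intro mult_right_mono) simp_all
  also have "\<dots> = m * (\<kappa> * w / (2 * M))"
    by simp
  also have "\<dots> \<le> m * 1"
    using False assms(1,2) by (intro mult_left_mono) simp_all
  finally show ?thesis
    using assms(5) by simp
qed

lemma norm_scaleR_quotient_diff_le:
  fixes u v :: "'a::real_normed_vector"
  assumes "0 < \<kappa>" "0 \<le> K1" "0 \<le> K2" "0 \<le> K3" "1 \<le> \<sigma>" "\<sigma> \<le> \<rho>" "0 \<le> d"
    and p: "\<kappa> * \<sigma>^2 \<le> p" and q: "\<kappa> * \<rho>^2 \<le> q"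
    and pq: "\<bar>q - p\<bar> \<le> K2 * \<rho> * d"
    and uv: "norm (v - u) \<le> K1 * \<rho>^2 * d"
    and u: "norm u \<le> K3 * \<sigma>^3"
  shows "norm ((1 / q) *\<^sub>R v - (1 / p) *\<^sub>R u) \<le> (K1 / \<kappa> + K2 * K3 / \<kappa>^2) * d"
proof -
  have "0 < \<kappa> * \<sigma>^2" "0 < \<kappa> * \<rho>^2"
    using assms(1,5,6) by simp_all
  then have "0 < p" "0 < q"
    using p q by linarith+
  have first: "norm (v - u) / q \<le> K1 / \<kappa> * d"
  proof -
    have "norm (v - u) \<le> K1 / \<kappa> * d * (\<kappa> * \<rho>^2)"
      using uv \<open>0 < \<kappa>\<close> by (simp add: mult_ac)
    also have "\<dots> \<le> K1 / \<kappa> * d * q"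
      using q assms(1,2,7) by (intro mult_left_mono) simp_all
    finally show ?thesis
      using \<open>0 < q\<close> by (simp add: divide_le_eq)
  qed
  have second: "\<bar>p - q\<bar> / (p * q) * norm u \<le> K2 * K3 / \<kappa>^2 * d"
  proof -
    have "\<bar>p - q\<bar> * norm u \<le> (K2 * \<rho> * d) * (K3 * \<sigma>^3)"
      using pq u assms(3,5,7) by (intro mult_mono) (simp_all add: abs_minus_commute)
    also have "\<dots> = (K2 * K3 * d) * (\<rho> * \<sigma>^3)"
      by (simp add: mult_ac)
    also have "\<dots> \<le> (K2 * K3 * d) * (\<sigma>^2 * \<rho>^2)"
      using assms(3-7)
      by (intro mult_left_mono) (simp_all add: power2_eq_square power3_eq_cube mult_left_mono)
    also have "\<dots> = K2 * K3 / \<kappa>^2 * d * ((\<kappa> * \<sigma>^2) * (\<kappa> * \<rho>^2))"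
      using \<open>0 < \<kappa>\<close> by (simp add: field_simps power2_eq_square)
    also have "\<dots> \<le> K2 * K3 / \<kappa>^2 * d * (p * q)"
      using p q \<open>0 < \<kappa> * \<sigma>^2\<close> \<open>0 < \<kappa> * \<rho>^2\<close> assms(3,4,7)
      by (intro mult_left_mono mult_mono) simp_all
    finally show ?thesis
      using \<open>0 < p\<close> \<open>0 < q\<close> by (simp add: divide_le_eq mult.commute)
  qed
  have "(p - q) / (p * q) = 1 / q - 1 / p"
    using \<open>0 < p\<close> \<open>0 < q\<close> by (simp add: field_simps)
  then have "(1 / q) *\<^sub>R v - (1 / p) *\<^sub>R u = (1 / q) *\<^sub>R (v - u) + ((p - q) / (p * q)) *\<^sub>R u"
    by (simp add: scaleR_diff_right scaleR_diff_left)
  then have "norm ((1 / q) *\<^sub>R v - (1 / p) *\<^sub>R u) \<le> norm (v - u) / q + \<bar>p - q\<bar> / (p * q) * norm u"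
    using \<open>0 < p\<close> \<open>0 < q\<close> by (simp add: norm_triangle_le abs_mult)
  with first second show ?thesis
    by (simp add: algebra_simps)
qed

lemma lipschitz_on_scaleR_quotient:
  fixes S :: "'a::real_normed_vector \<Rightarrow> 'b::real_normed_vector" and r :: "'a \<Rightarrow> real"
  assumes "0 < \<kappa>" "0 \<le> K1" "0 \<le> K2" "0 \<le> K3"
    and r_ge: "\<And>x. x \<in> D \<Longrightarrow> \<kappa> * (1 + norm x)^2 \<le> r x"
    and r_diff: "\<And>x y. x \<in> D \<Longrightarrow> y \<in> D \<Longrightarrow> norm x \<le> norm y \<Longrightarrow>
      \<bar>r y - r x\<bar> \<le> K2 * (1 + norm y) * norm (y - x)"
    and S_diff: "\<And>x y. x \<in> D \<Longrightarrow> y \<in> D \<Longrightarrow> norm x \<le> norm y \<Longrightarrow>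
      norm (S y - S x) \<le> K1 * (1 + norm y)^2 * norm (y - x)"
    and S_le: "\<And>x. x \<in> D \<Longrightarrow> norm (S x) \<le> K3 * (1 + norm x)^3"
  shows "(K1 / \<kappa> + K2 * K3 / \<kappa>^2)-lipschitz_on D (\<lambda>x. (1 / r x) *\<^sub>R S x)"
proof -
  define L where "L = K1 / \<kappa> + K2 * K3 / \<kappa>^2"
  have one_sided: "norm ((1 / r y) *\<^sub>R S y - (1 / r x) *\<^sub>R S x) \<le> L * norm (y - x)"
    if "x \<in> D" "y \<in> D" "norm x \<le> norm y" for x y
    unfolding L_def
    by (rule norm_scaleR_quotient_diff_le[OF assms(1-4) _ _ _ r_ge r_ge r_diff S_diff S_le])
      (use that in simp_all)
  have "0 \<le> L"
    using assms(1-4) by (simp add: L_def)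
  then show ?thesis
    unfolding L_def[symmetric]
    by (intro lipschitz_onI) (metis one_sided dist_norm norm_minus_commute nle_le)
qed

lemma frob_eq_norm: "frob A = norm A"
  unfolding frob_def norm_vec_def L2_set_def by (simp add: sum_nonneg)

lemma sym_mat_add: "sym_mat A \<Longrightarrow> sym_mat B \<Longrightarrow> sym_mat (A + B)"
  by (simp add: sym_mat_def transpose_def vec_eq_iff)

lemma norm_mat_one_3_le: "norm (mat 1 :: real^3^3) \<le> 2"
  by (simp add: norm_mat_one real_le_lsqrt)

lemma abs_trace_square_le: "\<bar>trace (A ** A)\<bar> \<le> 3 * (norm A)^2"
  for A :: "real^3^3"
  using abs_trace_le[of "A ** A"] norm_matrix_square_le[of A] by simp

lemma abs_trace_square_diff_le:
  fixes A B :: "real^3^3"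
  assumes "norm A \<le> \<rho>" and "norm B \<le> \<rho>"
  shows "\<bar>trace (B ** B) - trace (A ** A)\<bar> \<le> 6 * \<rho> * norm (B - A)"
  using abs_trace_le[of "B ** B - A ** A"] norm_matrix_square_diff_le[OF assms]
  by (simp add: trace_sub)

lemma norm_ldg_S_le: "norm (ldg_S a b c A) \<le> (\<bar>a\<bar> + 3 * \<bar>b\<bar> + 3 * \<bar>c\<bar>) * (1 + norm A)^3"
proof -
  define s where "s = norm A"
  define t where "t = trace (A ** A)"
  have s: "0 \<le> s" unfolding s_def by simp
  have "norm (A ** A - (t / 3) *\<^sub>R mat 1) \<le> norm (A ** A) + \<bar>t\<bar> / 3 * norm (mat 1 :: real^3^3)"
    by (metis norm_scaleR norm_triangle_ineq4 abs_divide abs_numeral)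
  also have "\<dots> \<le> s^2 + (3 * s^2) / 3 * 2"
    using norm_matrix_square_le[of A] abs_trace_square_le[of A] norm_mat_one_3_le
    unfolding s_def t_def by (intro add_mono mult_mono divide_right_mono) simp_all
  also have "\<dots> = 3 * s^2" by simp
  finally have dev: "norm (A ** A - (t / 3) *\<^sub>R mat 1) \<le> 3 * s^2" .
  have "norm (ldg_S a b c A) \<le> \<bar>a\<bar> * s + \<bar>b\<bar> * norm (A ** A - (t / 3) *\<^sub>R mat 1) + \<bar>c\<bar> * \<bar>t\<bar> * s"
    unfolding ldg_S_def t_def s_def
    by (intro norm_triangle_le norm_triangle_le_diff add_mono) (simp_all add: abs_mult)
  also have "\<dots> \<le> \<bar>a\<bar> * s + \<bar>b\<bar> * (3 * s^2) + \<bar>c\<bar> * (3 * s^2) * s"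
    using dev abs_trace_square_le[of A] s unfolding s_def t_def
    by (intro add_mono mult_mono mult_left_mono) simp_all
  also have "\<dots> = \<bar>a\<bar> * s^1 + 3 * \<bar>b\<bar> * s^2 + 3 * \<bar>c\<bar> * s^3"
    by (simp add: power2_eq_square power3_eq_cube)
  also have "\<dots> \<le> (\<bar>a\<bar> + 3 * \<bar>b\<bar> + 3 * \<bar>c\<bar>) * (1 + s)^3"
    unfolding distrib_right by (intro add_mono mult_left_mono power_le_one_plus_power[OF s]) simp_all
  finally show ?thesis unfolding s_def .
qed

lemma norm_trace_square_scaleR_diff_le:
  fixes A B :: "real^3^3"
  assumes A: "norm A \<le> \<rho>" and B: "norm B \<le> \<rho>"
  shows "norm (trace (B ** B) *\<^sub>R B - trace (A ** A) *\<^sub>R A) \<le> 9 * \<rho>^2 * norm (B - A)"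
proof -
  have "\<bar>trace (B ** B)\<bar> \<le> 3 * \<rho>^2"
    using abs_trace_square_le[of B] power_mono[OF B norm_ge_zero, of 2] by linarith
  have "norm (trace (B ** B) *\<^sub>R B - trace (A ** A) *\<^sub>R A)
      \<le> \<bar>trace (B ** B)\<bar> * norm (B - A) + \<bar>trace (B ** B) - trace (A ** A)\<bar> * norm A"
    by (rule norm_scaleR_diff_le)
  also have "\<dots> \<le> 3 * \<rho>^2 * norm (B - A) + 6 * \<rho> * norm (B - A) * \<rho>"
    using \<open>\<bar>trace (B ** B)\<bar> \<le> 3 * \<rho>^2\<close> abs_trace_square_diff_le[OF A B] A
    by (intro add_mono mult_mono) simp_all
  finally show ?thesis
    by (simp add: power2_eq_square algebra_simps)
qed

lemma abs_power2_trace_square_diff_le: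
  fixes A B :: "real^3^3"
  assumes A: "norm A \<le> \<rho>" and B: "norm B \<le> \<rho>"
  shows "\<bar>(trace (B ** B))^2 - (trace (A ** A))^2\<bar> \<le> 36 * \<rho>^3 * norm (B - A)"
proof -
  define tA tB where "tA = trace (A ** A)" and "tB = trace (B ** B)"
  have "\<bar>tB + tA\<bar> \<le> 6 * \<rho>^2"
    using abs_trace_square_le[of A] abs_trace_square_le[of B]
      power_mono[OF A norm_ge_zero, of 2] power_mono[OF B norm_ge_zero, of 2]
    unfolding tA_def tB_def by linarith
  have "\<bar>tB^2 - tA^2\<bar> = \<bar>tB - tA\<bar> * \<bar>tB + tA\<bar>"
    by (simp add: power2_eq_square square_diff_square_factored abs_mult mult.commute)
  also have "\<dots> \<le> (6 * \<rho> * norm (B - A)) * (6 * \<rho>^2)"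
    using abs_trace_square_diff_le[OF A B] \<open>\<bar>tB + tA\<bar> \<le> 6 * \<rho>^2\<close> order_trans[OF norm_ge_zero A]
    unfolding tA_def tB_def by (intro mult_mono) simp_all
  finally show ?thesis
    unfolding tA_def tB_def by (simp add: power2_eq_square power3_eq_cube mult_ac)
qed

lemma norm_ldg_S_diff_le:
  fixes A B :: "real^3^3"
  assumes "1 \<le> \<rho>" and A: "norm A \<le> \<rho>" and B: "norm B \<le> \<rho>"
  shows "norm (ldg_S a b c B - ldg_S a b c A) \<le> (\<bar>a\<bar> + 6 * \<bar>b\<bar> + 9 * \<bar>c\<bar>) * \<rho>^2 * norm (B - A)"
proof -
  define d tA tB where "d = norm (B - A)" and "tA = trace (A ** A)" and "tB = trace (B ** B)"
  have "0 \<le> d"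
    by (simp add: d_def)
  have pow: "\<rho>^k * d \<le> \<rho>^2 * d" if "k \<le> 2" for k
    using that \<open>1 \<le> \<rho>\<close> \<open>0 \<le> d\<close> by (intro mult_right_mono power_increasing)
  have dev: "\<bar>tB - tA\<bar> / 3 * norm (mat 1 :: real^3^3) \<le> (6 * \<rho> * d) / 3 * 2"
    using abs_trace_square_diff_le[OF A B] norm_mat_one_3_le
    unfolding tA_def tB_def d_def by (intro mult_mono divide_right_mono) simp_all
  have eq: "ldg_S a b c B - ldg_S a b c A = a *\<^sub>R (B - A) - b *\<^sub>R (B ** B - A ** A)
      + (b * (tB - tA) / 3) *\<^sub>R mat 1 + c *\<^sub>R (tB *\<^sub>R B - tA *\<^sub>R A)"
    unfolding ldg_S_def tA_def tB_def by (simp add: algebra_simps diff_divide_distrib)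
  have "norm (ldg_S a b c B - ldg_S a b c A) \<le> \<bar>a\<bar> * d + \<bar>b\<bar> * norm (B ** B - A ** A)
      + \<bar>b\<bar> * (\<bar>tB - tA\<bar> / 3 * norm (mat 1 :: real^3^3)) + \<bar>c\<bar> * norm (tB *\<^sub>R B - tA *\<^sub>R A)"
    unfolding eq d_def
    by (intro norm_triangle_le norm_triangle_le_diff add_mono) (simp_all add: abs_mult)
  also have "\<dots> \<le> \<bar>a\<bar> * (\<rho>^2 * d) + \<bar>b\<bar> * (2 * (\<rho>^2 * d)) + \<bar>b\<bar> * (4 * (\<rho>^2 * d))
      + \<bar>c\<bar> * (9 * (\<rho>^2 * d))"
    using \<open>0 \<le> d\<close> pow[of 0] pow[of 1] dev
      norm_matrix_square_diff_le[OF A B] norm_trace_square_scaleR_diff_le[OF A B]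
    unfolding d_def tA_def tB_def by (intro add_mono mult_left_mono) simp_all
  finally show ?thesis
    unfolding d_def by (simp add: algebra_simps)
qed

lemma abs_ldg_f_diff_le:
  fixes A B :: "real^3^3"
  assumes "1 \<le> \<rho>" and A: "norm A \<le> \<rho>" and B: "norm B \<le> \<rho>"
  shows "\<bar>ldg_f a b c A0 B - ldg_f a b c A0 A\<bar> \<le> (3 * \<bar>a\<bar> + 3 * \<bar>b\<bar> + 9 * \<bar>c\<bar>) * \<rho>^3 * norm (B - A)"
proof -
  define d tA tB cA cB where "d = norm (B - A)" and "tA = trace (A ** A)" and "tB = trace (B ** B)"
    and "cA = trace (A ** A ** A)" and "cB = trace (B ** B ** B)"
  have pow: "\<rho>^k * d \<le> \<rho>^3 * d" if "k \<le> 3" for k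
    using that \<open>1 \<le> \<rho>\<close> by (intro mult_right_mono power_increasing) (simp_all add: d_def)
  have dt: "\<bar>tB - tA\<bar> \<le> 6 * (\<rho>^3 * d)"
    using abs_trace_square_diff_le[OF A B] pow[of 1] unfolding tA_def tB_def d_def by simp
  have dc: "\<bar>cB - cA\<bar> \<le> 9 * (\<rho>^3 * d)"
    using abs_trace_le[of "B ** B ** B - A ** A ** A"] norm_matrix_cube_diff_le[OF A B] pow[of 2]
    unfolding cA_def cB_def d_def by (simp add: trace_sub)
  have eq: "ldg_f a b c A0 B - ldg_f a b c A0 A = a / 2 * (tB - tA) - b / 3 * (cB - cA) + c / 4 * (tB^2 - tA^2)"
    unfolding ldg_f_def tA_def tB_def cA_def cB_def by (simp add: algebra_simps)
  have "\<bar>ldg_f a b c A0 B - ldg_f a b c A0 A\<bar>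
      \<le> \<bar>a\<bar> / 2 * \<bar>tB - tA\<bar> + \<bar>b\<bar> / 3 * \<bar>cB - cA\<bar> + \<bar>c\<bar> / 4 * \<bar>tB^2 - tA^2\<bar>"
    using abs_triangle_ineq4[of "a / 2 * (tB - tA)" "b / 3 * (cB - cA)"]
      abs_triangle_ineq[of "a / 2 * (tB - tA) - b / 3 * (cB - cA)" "c / 4 * (tB^2 - tA^2)"]
    unfolding eq abs_mult abs_divide abs_numeral by linarith
  also have "\<dots> \<le> \<bar>a\<bar> / 2 * (6 * (\<rho>^3 * d)) + \<bar>b\<bar> / 3 * (9 * (\<rho>^3 * d)) + \<bar>c\<bar> / 4 * (36 * (\<rho>^3 * d))"
    using dt dc abs_power2_trace_square_diff_le[OF A B]
    unfolding tA_def tB_def d_def by (intro add_mono mult_left_mono) (simp_all add: mult.assoc)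
  finally show ?thesis
    unfolding d_def by (simp add: algebra_simps)
qed

lemma ldg_f_ge_quartic:
  assumes "sym_mat Q"
  shows "A0 + a / 2 * (norm Q)^2 - \<bar>b\<bar> * (norm Q)^3 + c / 4 * (norm Q)^4 \<le> ldg_f a b c A0 Q"
proof -
  have "trace (Q ** Q) = (norm Q)^2"
    using assms unfolding sym_mat_def by (rule trace_square_eq_power2_norm)
  moreover have "b / 3 * trace (Q ** Q ** Q) \<le> \<bar>b\<bar> * (norm Q)^3"
  proof -
    have "norm (Q ** Q ** Q) \<le> norm (Q ** Q) * norm Q"
      by (rule norm_matrix_mult_le)
    also have "\<dots> \<le> (norm Q)^2 * norm Q"
      by (intro mult_right_mono norm_matrix_square_le) simp
    finally have "norm (Q ** Q ** Q) \<le> (norm Q)^3"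
      by (simp add: power3_eq_cube power2_eq_square)
    then have "\<bar>trace (Q ** Q ** Q)\<bar> \<le> 3 * (norm Q)^3"
      using abs_trace_le[of "Q ** Q ** Q"] by simp
    then have "\<bar>b / 3 * trace (Q ** Q ** Q)\<bar> \<le> \<bar>b\<bar> / 3 * (3 * (norm Q)^3)"
      unfolding abs_mult abs_divide abs_numeral by (intro mult_left_mono) simp_all
    then show ?thesis
      by simp
  qed
  ultimately show ?thesis
    unfolding ldg_f_def by (simp add: power_mult[symmetric] algebra_simps)
qed

lemma ldg_f_coercive:
  assumes "0 < c" and inf_pos: "0 < (INF Q \<in> {Q. sym_mat Q}. ldg_f a b c A0 Q)"
  obtains k where "0 < k" and "\<And>Q. sym_mat Q \<Longrightarrow> k * (1 + norm Q)^4 \<le> ldg_f a b c A0 Q"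
proof -
  obtain M where "0 < M"
    and M: "\<And>s. 0 \<le> s \<Longrightarrow> c / 8 * (1 + s)^4 - M \<le> A0 + a / 2 * s^2 - \<bar>b\<bar> * s^3 + c / 4 * s^4"
    using quartic_ge_shifted_quartic[OF \<open>0 < c\<close>] by blast
  have far: "c / 8 * (1 + norm Q)^4 - M \<le> ldg_f a b c A0 Q" if "sym_mat Q" for Q
    using M[of "norm Q"] ldg_f_ge_quartic[OF that, of A0 a b c] by simp
  define m where "m = (INF Q \<in> {Q. sym_mat Q}. ldg_f a b c A0 Q)"
  have near: "m \<le> ldg_f a b c A0 Q" if "sym_mat Q" for Q
    unfolding m_def
  proof (rule cINF_lower)
    have "- M \<le> ldg_f a b c A0 Q" if "sym_mat Q" for Q
      using far[OF that] \<open>0 < c\<close> zero_le_power[of "1 + norm Q" 4]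
      by (smt (verit) divide_nonneg_pos mult_nonneg_nonneg norm_ge_zero)
    then show "bdd_below (ldg_f a b c A0 ` {Q. sym_mat Q})"
      by (intro bdd_belowI2) simp
  qed (use that in simp)
  show ?thesis
  proof
    show "0 < min (c / 8 / 2) (m * (c / 8) / (2 * M))"
      using \<open>0 < c\<close> \<open>0 < M\<close> inf_pos by (simp add: m_def)
    show "min (c / 8 / 2) (m * (c / 8) / (2 * M)) * (1 + norm Q)^4 \<le> ldg_f a b c A0 Q"
      if "sym_mat Q" for Q
      using inf_pos \<open>0 < M\<close> \<open>0 < c\<close> near[OF that] far[OF that]
      by (intro min_mult_le_of_lower_bounds) (simp_all add: m_def)
  qed
qed

lemma ldg_r_ge:
  assumes "0 \<le> k" and "k * (1 + norm Q)^4 \<le> ldg_f a b c A0 Q"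
  shows "sqrt (2 * k) * (1 + norm Q)^2 \<le> ldg_r a b c A0 Q"
proof -
  have "sqrt ((1 + norm Q)^4) = (1 + norm Q)^2"
    by (rule real_sqrt_unique) simp_all
  then have "sqrt (2 * k) * (1 + norm Q)^2 = sqrt (2 * (k * (1 + norm Q)^4))"
    by (simp add: real_sqrt_mult)
  also have "\<dots> \<le> ldg_r a b c A0 Q"
    unfolding ldg_r_def using assms(2) by simp
  finally show ?thesis .
qed

lemma abs_ldg_r_diff_le:
  fixes A B :: "real^3^3"
  assumes "0 < k"
    and fA: "k * (1 + norm A)^4 \<le> ldg_f a b c A0 A"
    and fB: "k * (1 + norm B)^4 \<le> ldg_f a b c A0 B"
    and AB: "norm A \<le> norm B"
  shows "\<bar>ldg_r a b c A0 B - ldg_r a b c A0 A\<bar>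
    \<le> 2 * (3 * \<bar>a\<bar> + 3 * \<bar>b\<bar> + 9 * \<bar>c\<bar>) / sqrt (2 * k) * (1 + norm B) * norm (B - A)"
proof -
  define \<rho> where "\<rho> = 1 + norm B"
  define K where "K = 3 * \<bar>a\<bar> + 3 * \<bar>b\<bar> + 9 * \<bar>c\<bar>"
  have "0 \<le> ldg_f a b c A0 A" "0 \<le> ldg_f a b c A0 B"
    using \<open>0 < k\<close> fA fB zero_le_power[of "1 + norm A" 4] zero_le_power[of "1 + norm B" 4]
    by (smt (verit) mult_nonneg_nonneg norm_ge_zero)+
  have "0 < \<rho>"
    by (simp add: \<rho>_def add_pos_nonneg)
  then have "0 < sqrt (2 * k) * \<rho>^2"
    using \<open>0 < k\<close> by simp
  have "\<bar>ldg_r a b c A0 B - ldg_r a b c A0 A\<bar>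
      \<le> \<bar>2 * ldg_f a b c A0 B - 2 * ldg_f a b c A0 A\<bar> / (sqrt (2 * k) * \<rho>^2)"
    unfolding ldg_r_def
  proof (rule abs_sqrt_diff_le)
    show "sqrt (2 * k) * \<rho>^2 \<le> sqrt (2 * ldg_f a b c A0 B)"
      using ldg_r_ge[OF _ fB] \<open>0 < k\<close> by (simp add: \<rho>_def ldg_r_def)
  qed (use \<open>0 \<le> ldg_f a b c A0 A\<close> \<open>0 \<le> ldg_f a b c A0 B\<close> \<open>0 < sqrt (2 * k) * \<rho>^2\<close> in simp_all)
  also have "\<dots> \<le> 2 * (K * \<rho>^3 * norm (B - A)) / (sqrt (2 * k) * \<rho>^2)"
  proof (rule divide_right_mono)
    have "\<bar>ldg_f a b c A0 B - ldg_f a b c A0 A\<bar> \<le> K * \<rho>^3 * norm (B - A)"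
      using abs_ldg_f_diff_le[of \<rho> A B a b c A0] AB by (simp add: \<rho>_def K_def)
    then show "\<bar>2 * ldg_f a b c A0 B - 2 * ldg_f a b c A0 A\<bar> \<le> 2 * (K * \<rho>^3 * norm (B - A))"
      by arith
  qed (use \<open>0 < sqrt (2 * k) * \<rho>^2\<close> in simp)
  also have "\<dots> = 2 * K / sqrt (2 * k) * \<rho> * norm (B - A)"
    using \<open>0 < \<rho>\<close> by (simp add: power2_eq_square power3_eq_cube)
  finally show ?thesis
    unfolding \<rho>_def K_def .
qed

lemma lipschitz_on_ldg_P:
  assumes "0 < c" and "0 < (INF Q \<in> {Q. sym_mat Q}. ldg_f a b c A0 Q)"
  obtains C where "C-lipschitz_on {Q. sym_mat Q} (ldg_P a b c A0)"
proof -
  obtain k where "0 < k" and k: "\<And>Q. sym_mat Q \<Longrightarrow> k * (1 + norm Q)^4 \<le> ldg_f a b c A0 Q"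
    using ldg_f_coercive[OF assms] by blast
  define K1 K2 K3 where "K1 = \<bar>a\<bar> + 6 * \<bar>b\<bar> + 9 * \<bar>c\<bar>"
    and "K2 = 2 * (3 * \<bar>a\<bar> + 3 * \<bar>b\<bar> + 9 * \<bar>c\<bar>) / sqrt (2 * k)"
    and "K3 = \<bar>a\<bar> + 3 * \<bar>b\<bar> + 3 * \<bar>c\<bar>"
  have "(K1 / sqrt (2 * k) + K2 * K3 / (sqrt (2 * k))^2)-lipschitz_on {Q. sym_mat Q} (ldg_P a b c A0)"
    unfolding ldg_P_def[abs_def]
  proof (rule lipschitz_on_scaleR_quotient)
    show "norm (ldg_S a b c B - ldg_S a b c A) \<le> K1 * (1 + norm B)^2 * norm (B - A)"
      if "norm A \<le> norm B" for A B
      using norm_ldg_S_diff_le[of "1 + norm B" A B] that by (simp add: K1_def)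
  qed (use \<open>0 < k\<close> k ldg_r_ge abs_ldg_r_diff_le norm_ldg_S_le in \<open>auto simp: K1_def K2_def K3_def\<close>)
  then show ?thesis ..
qed

theorem theorem4p11:
  fixes a b c A0 :: real
  assumes "c > 0" and "A0 > 0"
    and "(INF Q \<in> {Q. sym_mat Q}. ldg_f a b c A0 Q) > 0"
  shows "\<exists>L>0. \<forall>Q dQ. sym_mat Q \<longrightarrow> sym_mat dQ \<longrightarrow>
           frob (ldg_P a b c A0 (Q + dQ) - ldg_P a b c A0 Q) \<le> L * frob dQ"
proof -
  obtain C where C: "C-lipschitz_on {Q. sym_mat Q} (ldg_P a b c A0)"
    using lipschitz_on_ldg_P[OF assms(1,3)] .
  have "frob (ldg_P a b c A0 (Q + dQ) - ldg_P a b c A0 Q) \<le> (C + 1) * frob dQ"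
    if "sym_mat Q" "sym_mat dQ" for Q dQ
  proof -
    have "norm (ldg_P a b c A0 (Q + dQ) - ldg_P a b c A0 Q) \<le> C * norm dQ"
      using lipschitz_on_normD[OF C, of "Q + dQ" Q] sym_mat_add that by simp
    then show ?thesis
      by (simp add: frob_eq_norm distrib_right add_increasing2)
  qed
  moreover have "0 < C + 1"
    using lipschitz_on_nonneg[OF C] by simp
  ultimately show ?thesis
    by blast
qed

end
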